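(* Let $P:\mathcal{C}^{op}\to\mathsf{InfSl}$ be an elementary and existential doctrine. Then the maps of the cartesian bicategory $\mathsf{Rel}(P)$ are precisely the elements $\phi\in P(X\times Y)$ that are both functional and entire from $X$ to $Y$.
   Context: An elementary and existential doctrine is a functor $P:\mathcal{C}^{op}\to\mathsf{InfSl}$ from a category with finite products to inf-semilattices such that for each $Y$ there is an equality predicate $\delta_Y\in P(Y\times Y)$ with $\alpha\mapsto P_{\langle\pi_1,\pi_2\rangle}(\alpha)\wedge P_{\langle\pi_2,\pi_3\rangle}(\delta_Y)$ left adjoint to $P_{\mathrm{id}_X\times\Delta_Y}:P(X\times Y\times Y)\to P(X\times Y)$, and for each projection $\pi_X:X\times Y\to X$, $P_{\pi_X}$ has a left adjoint $\exists_{\pi_X}$ satisfying Beck–Chevalley and Frobenius reciprocity. $\mathsf{Rel}(P)$ is the cartesian bicategory whose objects are those of $\mathcal{C}$, with $\mathsf{Rel}(P)[X,Y]=P(X\times Y)$ (ordered as in $P$), identities $\delta_X$, composition of $\phi:X\to Y$, $\psi:Y\to Z$ given by $\exists_{\pi_{X\times Z}}(P_{\pi_{X\times Y}}(\phi)\wedge P_{\pi_{Y\times Z}}(\psi))$ (projections out of $X\times Y\times Z$), monoidal product on objects the product of $\mathcal{C}$ and on arrows $\phi\otimes\psi=P_{\langle\pi_X,\pi_Y\rangle}(\phi)\wedge P_{\langle\pi_U,\pi_V\rangle}(\psi)$, and comonoids $\mathrm{copy}_X=\Gamma_P(\Delta_X)$, $\mathrm{disc}_X=\Gamma_P(!_X)$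 and monoids $\mathrm{cocopy}_X=P_{\mathrm{id}_{X\times X}\times\Delta_X}(\delta_{X\times X})$, $\mathrm{codisc}_X=P_{\mathrm{id}_1\times !_X}(\delta_1)$, where $\Gamma_P(f)=P_{f\times\mathrm{id}_Y}(\delta_Y)$ for $f:X\to Y$. In a cartesian bicategory (composition in diagrammatic order) an arrow $f:X\to Y$ is a map if $f;\mathrm{copy}_Y\ge\mathrm{copy}_X;(f\otimes f)$ and $f;\mathrm{disc}_Y\ge\mathrm{disc}_X$. An element $\alpha\in P(X\times Y)$ is functional from $X$ to $Y$ if $P_{\langle\pi_1,\pi_2\rangle}(\alpha)\wedge P_{\langle\pi_1,\pi_3\rangle}(\alpha)\le P_{\langle\pi_2,\pi_3\rangle}(\delta_Y)$ in $P(X\times Y\times Y)$, and entire from $X$ to $Y$ if $\top_X\le\exists_{\pi_X}(\alpha)$ in $P(X)$. *)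

theory Defs
  imports Main
begin

text \<open>Objects have type 'o, arrows have type 'a (every element of 'a is an arrow).
  cmp g f is the usual composite g after f, defined when cod f = dom g.\<close>

record ('o,'a) fpcat =
  cdom :: "'a \<Rightarrow> 'o"
  ccod :: "'a \<Rightarrow> 'o"
  cmp  :: "'a \<Rightarrow> 'a \<Rightarrow> 'a"
  idt  :: "'o \<Rightarrow> 'a"
  one  :: "'o"
  bang :: "'o \<Rightarrow> 'a"
  prd  :: "'o \<Rightarrow> 'o \<Rightarrow> 'o"
  pr1  :: "'o \<Rightarrow> 'o \<Rightarrow> 'a"
  pr2  :: "'o \<Rightarrow> 'o \<Rightarrow> 'a"
  tup  :: "'a \<Rightarrow> 'a \<Rightarrow> 'a"

definition hom :: "('o,'a) fpcat \<Rightarrow> 'a \<Rightarrow> 'o \<Rightarrow> 'o \<Rightarrow> bool" where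
  "hom C f X Y \<longleftrightarrow> cdom C f = X \<and> ccod C f = Y"

definition is_fp_category :: "('o,'a) fpcat \<Rightarrow> bool" where
  "is_fp_category C \<longleftrightarrow>
     (\<forall>X. hom C (idt C X) X X)
   \<and> (\<forall>f g. ccod C f = cdom C g \<longrightarrow> hom C (cmp C g f) (cdom C f) (ccod C g))
   \<and> (\<forall>f. cmp C f (idt C (cdom C f)) = f \<and> cmp C (idt C (ccod C f)) f = f)
   \<and> (\<forall>f g h. ccod C f = cdom C g \<longrightarrow> ccod C g = cdom C h \<longrightarrow>
          cmp C h (cmp C g f) = cmp C (cmp C h g) f)
   \<and> (\<forall>X. hom C (bang C X) X (one C))
   \<and> (\<forall>X f. hom C f X (one C) \<longrightarrow> f = bang C X)
   \<and> (\<forall>X Y. hom C (pr1 C X Y) (prd C X Y) X \<and> hom C (pr2 C X Y) (prd C X Y) Y)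
   \<and> (\<forall>Z X Y f g. hom C f Z X \<longrightarrow> hom C g Z Y \<longrightarrow>
          hom C (tup C f g) Z (prd C X Y)
        \<and> cmp C (pr1 C X Y) (tup C f g) = f
        \<and> cmp C (pr2 C X Y) (tup C f g) = g)
   \<and> (\<forall>Z X Y h. hom C h Z (prd C X Y) \<longrightarrow>
          h = tup C (cmp C (pr1 C X Y) h) (cmp C (pr2 C X Y) h))"

definition cross :: "('o,'a) fpcat \<Rightarrow> 'a \<Rightarrow> 'a \<Rightarrow> 'a" where
  "cross C f g = tup C (cmp C f (pr1 C (cdom C f) (cdom C g)))
                       (cmp C g (pr2 C (cdom C f) (cdom C g)))"

definition diag :: "('o,'a) fpcat \<Rightarrow> 'o \<Rightarrow> 'a" where
  "diag C X = tup C (idt C X) (idt C X)"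

definition tpr1 :: "('o,'a) fpcat \<Rightarrow> 'o \<Rightarrow> 'o \<Rightarrow> 'o \<Rightarrow> 'a" where
  "tpr1 C X Y Z = pr1 C X (prd C Y Z)"
definition tpr2 :: "('o,'a) fpcat \<Rightarrow> 'o \<Rightarrow> 'o \<Rightarrow> 'o \<Rightarrow> 'a" where
  "tpr2 C X Y Z = cmp C (pr1 C Y Z) (pr2 C X (prd C Y Z))"
definition tpr3 :: "('o,'a) fpcat \<Rightarrow> 'o \<Rightarrow> 'o \<Rightarrow> 'o \<Rightarrow> 'a" where
  "tpr3 C X Y Z = cmp C (pr2 C Y Z) (pr2 C X (prd C Y Z))"

text \<open>A functor P : C^op \<rightarrow> InfSl: fibre carriers car X, with order leq X,
  binary meet mt X and top tp X; reindexing rx f = P_f.  eq Y is \<delta>_Y and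
  ex X Y is \<exists> along the projection pr1 X Y : X\<times>Y \<rightarrow> X.\<close>

record ('o,'a,'p) doctrine =
  car :: "'o \<Rightarrow> 'p set"
  leq :: "'o \<Rightarrow> 'p \<Rightarrow> 'p \<Rightarrow> bool"
  mt  :: "'o \<Rightarrow> 'p \<Rightarrow> 'p \<Rightarrow> 'p"
  tp  :: "'o \<Rightarrow> 'p"
  rx  :: "'a \<Rightarrow> 'p \<Rightarrow> 'p"
  eqp :: "'o \<Rightarrow> 'p"
  ex  :: "'o \<Rightarrow> 'o \<Rightarrow> 'p \<Rightarrow> 'p"

definition is_infsl :: "'p set \<Rightarrow> ('p \<Rightarrow> 'p \<Rightarrow> bool) \<Rightarrow> ('p \<Rightarrow> 'p \<Rightarrow> 'p) \<Rightarrow> 'p \<Rightarrow> bool" where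
  "is_infsl A le m t \<longleftrightarrow>
     (\<forall>a\<in>A. le a a)
   \<and> (\<forall>a\<in>A. \<forall>b\<in>A. le a b \<longrightarrow> le b a \<longrightarrow> a = b)
   \<and> (\<forall>a\<in>A. \<forall>b\<in>A. \<forall>c\<in>A. le a b \<longrightarrow> le b c \<longrightarrow> le a c)
   \<and> t \<in> A \<and> (\<forall>a\<in>A. le a t)
   \<and> (\<forall>a\<in>A. \<forall>b\<in>A. m a b \<in> A \<and> le (m a b) a \<and> le (m a b) b
          \<and> (\<forall>c\<in>A. le c a \<longrightarrow> le c b \<longrightarrow> le c (m a b)))"

definition is_infsl_doctrine :: "('o,'a) fpcat \<Rightarrow> ('o,'a,'p) doctrine \<Rightarrow> bool" where
  "is_infsl_doctrine C P \<longleftrightarrow>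
     (\<forall>X. is_infsl (car P X) (leq P X) (mt P X) (tp P X))
   \<and> (\<forall>f A B. hom C f A B \<longrightarrow>
          (\<forall>\<alpha>\<in>car P B. rx P f \<alpha> \<in> car P A)
        \<and> (\<forall>\<alpha>\<in>car P B. \<forall>\<beta>\<in>car P B. rx P f (mt P B \<alpha> \<beta>) = mt P A (rx P f \<alpha>) (rx P f \<beta>))
        \<and> rx P f (tp P B) = tp P A)
   \<and> (\<forall>X. \<forall>\<alpha>\<in>car P X. rx P (idt C X) \<alpha> = \<alpha>)
   \<and> (\<forall>f g. ccod C f = cdom C g \<longrightarrow>
          (\<forall>\<alpha>\<in>car P (ccod C g). rx P (cmp C g f) \<alpha> = rx P f (rx P g \<alpha>)))"

definition is_elementary :: "('o,'a) fpcat \<Rightarrow> ('o,'a,'p) doctrine \<Rightarrow> bool" where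
  "is_elementary C P \<longleftrightarrow>
     (\<forall>Y. eqp P Y \<in> car P (prd C Y Y)
        \<and> (\<forall>X. \<forall>\<alpha>\<in>car P (prd C X Y). \<forall>\<beta>\<in>car P (prd C X (prd C Y Y)).
             leq P (prd C X (prd C Y Y))
               (mt P (prd C X (prd C Y Y))
                  (rx P (tup C (tpr1 C X Y Y) (tpr2 C X Y Y)) \<alpha>)
                  (rx P (tup C (tpr2 C X Y Y) (tpr3 C X Y Y)) (eqp P Y)))
               \<beta>
             \<longleftrightarrow> leq P (prd C X Y) \<alpha> (rx P (cross C (idt C X) (diag C Y)) \<beta>)))"

definition is_existential :: "('o,'a) fpcat \<Rightarrow> ('o,'a,'p) doctrine \<Rightarrow> bool" where
  "is_existential C P \<longleftrightarrow>
     (\<forall>X Y. \<forall>\<alpha>\<in>car P (prd C X Y). ex P X Y \<alpha> \<in> car P X)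
   \<and> (\<forall>X Y. \<forall>\<alpha>\<in>car P (prd C X Y). \<forall>\<beta>\<in>car P X.
          leq P X (ex P X Y \<alpha>) \<beta> \<longleftrightarrow> leq P (prd C X Y) \<alpha> (rx P (pr1 C X Y) \<beta>))
   \<comment> \<open>Beck--Chevalley for the pullback of pr1 X Y along f : X' \<rightarrow> X\<close>
   \<and> (\<forall>f X' X Y. hom C f X' X \<longrightarrow> (\<forall>\<alpha>\<in>car P (prd C X Y).
          rx P f (ex P X Y \<alpha>) = ex P X' Y (rx P (cross C f (idt C Y)) \<alpha>)))
   \<comment> \<open>Frobenius reciprocity\<close>
   \<and> (\<forall>X Y. \<forall>\<alpha>\<in>car P (prd C X Y). \<forall>\<beta>\<in>car P X.
          ex P X Y (mt P (prd C X Y) (rx P (pr1 C X Y) \<beta>) \<alpha>) = mt P X \<beta> (ex P X Y \<alpha>))"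

definition is_elem_exist_doctrine :: "('o,'a) fpcat \<Rightarrow> ('o,'a,'p) doctrine \<Rightarrow> bool" where
  "is_elem_exist_doctrine C P \<longleftrightarrow> is_fp_category C \<and> is_infsl_doctrine C P
     \<and> is_elementary C P \<and> is_existential C P"

text \<open>The
  ternary product is taken as (X\<times>Z)\<times>Y so that \<pi>_{X\<times>Z} is the projection pr1.\<close>

definition rcomp :: "('o,'a) fpcat \<Rightarrow> ('o,'a,'p) doctrine \<Rightarrow> 'o \<Rightarrow> 'o \<Rightarrow> 'o \<Rightarrow> 'p \<Rightarrow> 'p \<Rightarrow> 'p" where
  "rcomp C P X Y Z \<phi> \<psi> =
    (let W = prd C (prd C X Z) Y;
         pXZ = pr1 C (prd C X Z) Y;
         pY = pr2 C (prd C X Z) Y;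
         pX = cmp C (pr1 C X Z) pXZ;
         pZ = cmp C (pr2 C X Z) pXZ
     in ex P (prd C X Z) Y
          (mt P W (rx P (tup C pX pY) \<phi>) (rx P (tup C pY pZ) \<psi>)))"

definition rtensor :: "('o,'a) fpcat \<Rightarrow> ('o,'a,'p) doctrine \<Rightarrow> 'o \<Rightarrow> 'o \<Rightarrow> 'o \<Rightarrow> 'o \<Rightarrow> 'p \<Rightarrow> 'p \<Rightarrow> 'p" where
  "rtensor C P X Y U V \<phi> \<psi> =
    (let S = prd C X U; T = prd C Y V;
         pX = cmp C (pr1 C X U) (pr1 C S T);
         pU = cmp C (pr2 C X U) (pr1 C S T);
         pY = cmp C (pr1 C Y V) (pr2 C S T);
         pV = cmp C (pr2 C Y V) (pr2 C S T)
     in mt P (prd C S T) (rx P (tup C pX pY) \<phi>) (rx P (tup C pU pV) \<psi>))"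

definition graph :: "('o,'a) fpcat \<Rightarrow> ('o,'a,'p) doctrine \<Rightarrow> 'a \<Rightarrow> 'p" where
  "graph C P f = rx P (cross C f (idt C (ccod C f))) (eqp P (ccod C f))"

definition rcopy :: "('o,'a) fpcat \<Rightarrow> ('o,'a,'p) doctrine \<Rightarrow> 'o \<Rightarrow> 'p" where
  "rcopy C P X = graph C P (diag C X)"

definition rdisc :: "('o,'a) fpcat \<Rightarrow> ('o,'a,'p) doctrine \<Rightarrow> 'o \<Rightarrow> 'p" where
  "rdisc C P X = graph C P (bang C X)"

definition is_map :: "('o,'a) fpcat \<Rightarrow> ('o,'a,'p) doctrine \<Rightarrow> 'o \<Rightarrow> 'o \<Rightarrow> 'p \<Rightarrow> bool" where
  "is_map C P X Y f \<longleftrightarrow>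
     leq P (prd C X (prd C Y Y))
        (rcomp C P X (prd C X X) (prd C Y Y) (rcopy C P X) (rtensor C P X Y X Y f f))
        (rcomp C P X Y (prd C Y Y) f (rcopy C P Y))
   \<and> leq P (prd C X (one C))
        (rdisc C P X)
        (rcomp C P X Y (one C) f (rdisc C P Y))"

definition functional :: "('o,'a) fpcat \<Rightarrow> ('o,'a,'p) doctrine \<Rightarrow> 'o \<Rightarrow> 'o \<Rightarrow> 'p \<Rightarrow> bool" where
  "functional C P X Y \<alpha> \<longleftrightarrow>
     leq P (prd C X (prd C Y Y))
       (mt P (prd C X (prd C Y Y))
          (rx P (tup C (tpr1 C X Y Y) (tpr2 C X Y Y)) \<alpha>)
          (rx P (tup C (tpr1 C X Y Y) (tpr3 C X Y Y)) \<alpha>))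
       (rx P (tup C (tpr2 C X Y Y) (tpr3 C X Y Y)) (eqp P Y))"

definition entire :: "('o,'a) fpcat \<Rightarrow> ('o,'a,'p) doctrine \<Rightarrow> 'o \<Rightarrow> 'o \<Rightarrow> 'p \<Rightarrow> bool" where
  "entire C P X Y \<alpha> \<longleftrightarrow> leq P X (tp P X) (ex P X Y \<alpha>)"

end

theory Submission
  imports Defs
begin

text \<open>In \<open>Rel(P)\<close> the composite \<open>copy\<^sub>X ; (\<phi> \<otimes> \<phi>)\<close> is the predicate
  \<open>\<phi>(x,y) \<and> \<phi>(x,y')\<close>, while \<open>\<phi> ; copy\<^sub>Y\<close> lies between \<open>\<phi>(x,y) \<and> y = y'\<close> and
  \<open>y = y'\<close>.  As \<open>\<phi>(x,y) \<and> \<phi>(x,y')\<close> is below \<open>\<phi>(x,y)\<close>, the first inequality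
  defining a map therefore says exactly \<open>\<phi>(x,y) \<and> \<phi>(x,y') \<le> y = y'\<close>, i.e. that
  \<phi> is functional.  Since \<open>disc\<close> is the top predicate, Beck-Chevalley turns
  \<open>\<phi> ; disc\<^sub>Y\<close> into \<open>\<exists>y. \<phi>(x,y)\<close>, and the second inequality says that \<phi> is
  entire.  All computations rest on reflexivity and substitutivity of \<open>\<delta>\<close>, both
  consequences of elementarity, and on the adjunction \<open>\<exists> \<stileturn> P\<^sub>\<pi>\<close>.\<close>

locale fp_category =
  fixes C :: "('o,'a) fpcat"
  assumes fp: "is_fp_category C"
begin

lemma dom_idt [simp]: "cdom C (idt C X) = X"
  and cod_idt [simp]: "ccod C (idt C X) = X"
  using fp unfolding is_fp_category_def hom_def by auto

lemma dom_cmp [simp]: "ccod C f = cdom C g \<Longrightarrow> cdom C (cmp C g f) = cdom C f"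
  and cod_cmp [simp]: "ccod C f = cdom C g \<Longrightarrow> ccod C (cmp C g f) = ccod C g"
  using fp unfolding is_fp_category_def hom_def by auto

lemma dom_pr1 [simp]: "cdom C (pr1 C X Y) = prd C X Y"
  and cod_pr1 [simp]: "ccod C (pr1 C X Y) = X"
  and dom_pr2 [simp]: "cdom C (pr2 C X Y) = prd C X Y"
  and cod_pr2 [simp]: "ccod C (pr2 C X Y) = Y"
  and dom_bang [simp]: "cdom C (bang C X) = X"
  and cod_bang [simp]: "ccod C (bang C X) = one C"
  using fp unfolding is_fp_category_def hom_def by auto

lemma bang_unique: "cdom C f = X \<Longrightarrow> ccod C f = one C \<Longrightarrow> f = bang C X"
  using fp unfolding is_fp_category_def hom_def by auto

lemma cmp_assoc [simp]:
  "ccod C f = cdom C g \<Longrightarrow> ccod C g = cdom C h \<Longrightarrow> cmp C (cmp C h g) f = cmp C h (cmp C g f)"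
  using fp unfolding is_fp_category_def hom_def by auto

lemma cmp_idt_left [simp]: "ccod C f = X \<Longrightarrow> cmp C (idt C X) f = f"
  and cmp_idt_right [simp]: "cdom C f = X \<Longrightarrow> cmp C f (idt C X) = f"
  using fp unfolding is_fp_category_def hom_def by auto

lemma tup_universal:
  assumes "cdom C f = cdom C g"
  shows "cdom C (tup C f g) = cdom C f" "ccod C (tup C f g) = prd C (ccod C f) (ccod C g)"
    "cmp C (pr1 C (ccod C f) (ccod C g)) (tup C f g) = f"
    "cmp C (pr2 C (ccod C f) (ccod C g)) (tup C f g) = g"
  using fp assms unfolding is_fp_category_def hom_def by metis+

lemma dom_tup [simp]: "cdom C f = cdom C g \<Longrightarrow> cdom C (tup C f g) = cdom C f"
  and cod_tup [simp]: "cdom C f = cdom C g \<Longrightarrow> ccod C (tup C f g) = prd C (ccod C f) (ccod C g)"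
  using tup_universal by auto

lemma pr1_tup [simp]:
    "cdom C f = cdom C g \<Longrightarrow> ccod C f = X \<Longrightarrow> ccod C g = Y \<Longrightarrow> cmp C (pr1 C X Y) (tup C f g) = f"
  and pr2_tup [simp]:
    "cdom C f = cdom C g \<Longrightarrow> ccod C f = X \<Longrightarrow> ccod C g = Y \<Longrightarrow> cmp C (pr2 C X Y) (tup C f g) = g"
  using tup_universal by auto

lemma tup_pr_cmp [simp]:
  "ccod C h = prd C X Y \<Longrightarrow> tup C (cmp C (pr1 C X Y) h) (cmp C (pr2 C X Y) h) = h"
  using fp unfolding is_fp_category_def hom_def by metis

lemma tup_cmp [simp]:
  assumes "cdom C f = cdom C g" "ccod C h = cdom C f"
  shows "cmp C (tup C f g) h = tup C (cmp C f h) (cmp C g h)"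
proof -
  let ?k = "cmp C (tup C f g) h"
  have "?k = tup C (cmp C (pr1 C (ccod C f) (ccod C g)) ?k) (cmp C (pr2 C (ccod C f) (ccod C g)) ?k)"
    using assms by simp
  also have "\<dots> = tup C (cmp C f h) (cmp C g h)"
    using assms by (simp del: cmp_assoc add: cmp_assoc [symmetric])
  finally show ?thesis .
qed

lemma tup_pr1_pr2 [simp]: "tup C (pr1 C X Y) (pr2 C X Y) = idt C (prd C X Y)"
  using tup_pr_cmp [of "idt C (prd C X Y)" X Y] by simp

lemma bang_cmp [simp]: "ccod C f = X \<Longrightarrow> cmp C (bang C X) f = bang C (cdom C f)"
  by (rule bang_unique) auto

lemma pr2_one [simp]: "pr2 C X (one C) = bang C (prd C X (one C))"
  by (rule bang_unique) auto

abbreviation tpr12 :: "'o \<Rightarrow> 'o \<Rightarrow> 'o \<Rightarrow> 'a" where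
  "tpr12 X Y Z \<equiv> tup C (tpr1 C X Y Z) (tpr2 C X Y Z)"

abbreviation tpr13 :: "'o \<Rightarrow> 'o \<Rightarrow> 'o \<Rightarrow> 'a" where
  "tpr13 X Y Z \<equiv> tup C (tpr1 C X Y Z) (tpr3 C X Y Z)"

abbreviation tpr23 :: "'o \<Rightarrow> 'o \<Rightarrow> 'o \<Rightarrow> 'a" where
  "tpr23 X Y Z \<equiv> tup C (tpr2 C X Y Z) (tpr3 C X Y Z)"

lemmas product_arrow_defs = tpr1_def tpr2_def tpr3_def cross_def diag_def

end

locale infsl_doctrine = fp_category C for C :: "('o,'a) fpcat" +
  fixes P :: "('o,'a,'p) doctrine"
  assumes infsl: "is_infsl_doctrine C P"
begin

lemma fibre_infsl: "is_infsl (car P X) (leq P X) (mt P X) (tp P X)"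
  using infsl unfolding is_infsl_doctrine_def by simp

lemma leq_refl: "a \<in> car P X \<Longrightarrow> leq P X a a"
  and leq_antisym: "a \<in> car P X \<Longrightarrow> b \<in> car P X \<Longrightarrow> leq P X a b \<Longrightarrow> leq P X b a \<Longrightarrow> a = b"
  and leq_trans: "a \<in> car P X \<Longrightarrow> b \<in> car P X \<Longrightarrow> c \<in> car P X \<Longrightarrow>
    leq P X a b \<Longrightarrow> leq P X b c \<Longrightarrow> leq P X a c"
  and tp_car [simp]: "tp P X \<in> car P X"
  and leq_tp: "a \<in> car P X \<Longrightarrow> leq P X a (tp P X)"
  and mt_car [simp]: "a \<in> car P X \<Longrightarrow> b \<in> car P X \<Longrightarrow> mt P X a b \<in> car P X"
  and mt_le1: "a \<in> car P X \<Longrightarrow> b \<in> car P X \<Longrightarrow> leq P X (mt P X a b) a"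
  and mt_le2: "a \<in> car P X \<Longrightarrow> b \<in> car P X \<Longrightarrow> leq P X (mt P X a b) b"
  and mt_greatest: "a \<in> car P X \<Longrightarrow> b \<in> car P X \<Longrightarrow> c \<in> car P X \<Longrightarrow>
    leq P X c a \<Longrightarrow> leq P X c b \<Longrightarrow> leq P X c (mt P X a b)"
  using fibre_infsl [of X] unfolding is_infsl_def by blast+

lemma mt_leI2: "leq P X b c \<Longrightarrow> a \<in> car P X \<Longrightarrow> b \<in> car P X \<Longrightarrow> c \<in> car P X \<Longrightarrow>
    leq P X (mt P X a b) c"
  by (auto intro: leq_trans mt_le2)

lemma mt_commute: "a \<in> car P X \<Longrightarrow> b \<in> car P X \<Longrightarrow> mt P X a b = mt P X b a"
  by (rule leq_antisym [of _ X]) (auto intro: mt_greatest mt_le1 mt_le2)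

lemma mt_tp_left [simp]: "a \<in> car P X \<Longrightarrow> mt P X (tp P X) a = a"
  by (rule leq_antisym [of _ X]) (auto intro: mt_le2 mt_greatest leq_tp leq_refl)

lemma mt_tp_right [simp]: "a \<in> car P X \<Longrightarrow> mt P X a (tp P X) = a"
  using mt_commute [of a X "tp P X"] by simp

lemma mt_mono_right: "a \<in> car P X \<Longrightarrow> b \<in> car P X \<Longrightarrow> c \<in> car P X \<Longrightarrow> leq P X b c \<Longrightarrow>
    leq P X (mt P X a b) (mt P X a c)"
  by (rule mt_greatest) (auto intro: mt_le1 mt_leI2)

lemma rx_car [simp]: "cdom C f = A \<Longrightarrow> \<alpha> \<in> car P (ccod C f) \<Longrightarrow> rx P f \<alpha> \<in> car P A"
  using infsl unfolding is_infsl_doctrine_def hom_def by blast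

lemma rx_mt [simp]: "ccod C f = B \<Longrightarrow> \<alpha> \<in> car P B \<Longrightarrow> \<beta> \<in> car P B \<Longrightarrow>
    rx P f (mt P B \<alpha> \<beta>) = mt P (cdom C f) (rx P f \<alpha>) (rx P f \<beta>)"
  using infsl unfolding is_infsl_doctrine_def hom_def by blast

lemma rx_tp [simp]: "ccod C f = B \<Longrightarrow> rx P f (tp P B) = tp P (cdom C f)"
  using infsl unfolding is_infsl_doctrine_def hom_def by blast

lemma rx_idt [simp]: "\<alpha> \<in> car P X \<Longrightarrow> rx P (idt C X) \<alpha> = \<alpha>"
  using infsl unfolding is_infsl_doctrine_def by blast

lemma rx_rx [simp]: "ccod C f = cdom C g \<Longrightarrow> \<alpha> \<in> car P (ccod C g) \<Longrightarrow>
    rx P f (rx P g \<alpha>) = rx P (cmp C g f) \<alpha>"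
  using infsl unfolding is_infsl_doctrine_def by metis

lemma rx_mono:
  assumes f: "cdom C f = A" "ccod C f = B" and \<alpha>\<beta>: "\<alpha> \<in> car P B" "\<beta> \<in> car P B" "leq P B \<alpha> \<beta>"
  shows "leq P A (rx P f \<alpha>) (rx P f \<beta>)"
proof -
  have "\<alpha> = mt P B \<alpha> \<beta>"
    using \<alpha>\<beta> by (intro leq_antisym [of _ B] mt_greatest leq_refl mt_le1) auto
  then have "rx P f \<alpha> = mt P A (rx P f \<alpha>) (rx P f \<beta>)"
    using f \<alpha>\<beta> by (metis rx_mt)
  then show ?thesis
    using f \<alpha>\<beta> by (metis mt_le2 rx_car)
qed

end

locale elementary_doctrine = infsl_doctrine +
  assumes elem: "is_elementary C P"
begin

lemma eqp_car [simp]: "eqp P Y \<in> car P (prd C Y Y)"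
  using elem unfolding is_elementary_def by blast

lemma eqp_adjunction:
  assumes "\<alpha> \<in> car P (prd C X Y)" "\<beta> \<in> car P (prd C X (prd C Y Y))"
  shows "leq P (prd C X (prd C Y Y))
      (mt P (prd C X (prd C Y Y)) (rx P (tpr12 X Y Y) \<alpha>) (rx P (tpr23 X Y Y) (eqp P Y))) \<beta>
    \<longleftrightarrow> leq P (prd C X Y) \<alpha> (rx P (cross C (idt C X) (diag C Y)) \<beta>)"
  using elem assms unfolding is_elementary_def by blast

lemma eqp_refl [simp]:
  assumes s: "ccod C s = Y"
  shows "rx P (tup C s s) (eqp P Y) = tp P (cdom C s)"
proof -
  define W where "W = cdom C s"
  \<comment> \<open>The adjunction at \<open>\<alpha> = \<top>\<close> and \<open>\<beta> = \<delta>\<^sub>Y(y,y')\<close>.\<close>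
  have "leq P (prd C W Y) (tp P (prd C W Y))
      (rx P (cross C (idt C W) (diag C Y)) (rx P (tpr23 W Y Y) (eqp P Y)))"
    by (subst eqp_adjunction [symmetric]) (simp_all add: product_arrow_defs leq_refl)
  then have "leq P (prd C W Y) (tp P (prd C W Y)) (rx P (tup C (pr2 C W Y) (pr2 C W Y)) (eqp P Y))"
    by (simp add: product_arrow_defs)
  then have "leq P W (rx P (tup C (idt C W) s) (tp P (prd C W Y)))
      (rx P (tup C (idt C W) s) (rx P (tup C (pr2 C W Y) (pr2 C W Y)) (eqp P Y)))"
    using s W_def by (intro rx_mono) auto
  then have "leq P W (tp P W) (rx P (tup C s s) (eqp P Y))"
    using s W_def by simp
  moreover have "rx P (tup C s s) (eqp P Y) \<in> car P W"
    using s W_def by simp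
  ultimately show ?thesis
    using W_def by (metis leq_antisym leq_tp tp_car)
qed

lemma eqp_subst:
  assumes "\<gamma> \<in> car P (prd C W Y)"
    and "cdom C s = W" "ccod C s = Y" "cdom C t = W" "ccod C t = Y"
  shows "leq P W (mt P W (rx P (tup C (idt C W) s) \<gamma>) (rx P (tup C s t) (eqp P Y)))
    (rx P (tup C (idt C W) t) \<gamma>)"
proof -
  have "leq P (prd C W (prd C Y Y))
      (mt P (prd C W (prd C Y Y)) (rx P (tpr12 W Y Y) \<gamma>) (rx P (tpr23 W Y Y) (eqp P Y)))
      (rx P (tpr13 W Y Y) \<gamma>)"
    using assms by (subst eqp_adjunction) (auto simp: product_arrow_defs intro: leq_refl)
  then have "leq P W
      (rx P (tup C (idt C W) (tup C s t))
        (mt P (prd C W (prd C Y Y)) (rx P (tpr12 W Y Y) \<gamma>) (rx P (tpr23 W Y Y) (eqp P Y))))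
      (rx P (tup C (idt C W) (tup C s t)) (rx P (tpr13 W Y Y) \<gamma>))"
    using assms by (intro rx_mono) (auto simp: product_arrow_defs)
  then show ?thesis
    using assms by (simp add: product_arrow_defs)
qed

lemma eqp_sym:
  "cdom C s = W \<Longrightarrow> ccod C s = Y \<Longrightarrow> cdom C t = W \<Longrightarrow> ccod C t = Y \<Longrightarrow>
    leq P W (rx P (tup C s t) (eqp P Y)) (rx P (tup C t s) (eqp P Y))"
  \<comment> \<open>Substitute \<open>t\<close> for \<open>s\<close> in the first argument of the valid \<open>\<delta>(s,s)\<close>.\<close>
  using eqp_subst [of "rx P (tup C (pr2 C W Y) (cmp C s (pr1 C W Y))) (eqp P Y)" W Y s t]
  by simp

lemma eqp_subst_sym:
  "\<gamma> \<in> car P (prd C W Y) \<Longrightarrow> cdom C s = W \<Longrightarrow> ccod C s = Y \<Longrightarrow> cdom C t = W \<Longrightarrow> ccod C t = Y \<Longrightarrow>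
    leq P W (mt P W (rx P (tup C (idt C W) t) \<gamma>) (rx P (tup C s t) (eqp P Y)))
      (rx P (tup C (idt C W) s) \<gamma>)"
  by (rule leq_trans [OF _ _ _ mt_mono_right eqp_subst [of \<gamma> W Y t s]]) (auto intro: eqp_sym)

end

locale existential_doctrine = infsl_doctrine +
  assumes exist: "is_existential C P"
begin

lemma ex_car [simp]: "\<alpha> \<in> car P (prd C X Y) \<Longrightarrow> ex P X Y \<alpha> \<in> car P X"
  using exist unfolding is_existential_def by blast

lemma ex_le_iff: "\<alpha> \<in> car P (prd C X Y) \<Longrightarrow> \<beta> \<in> car P X \<Longrightarrow>
    leq P X (ex P X Y \<alpha>) \<beta> \<longleftrightarrow> leq P (prd C X Y) \<alpha> (rx P (pr1 C X Y) \<beta>)"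
  using exist unfolding is_existential_def by blast

lemma rx_ex: "cdom C f = X' \<Longrightarrow> ccod C f = X \<Longrightarrow> \<alpha> \<in> car P (prd C X Y) \<Longrightarrow>
    rx P f (ex P X Y \<alpha>) = ex P X' Y (rx P (cross C f (idt C Y)) \<alpha>)"
  using exist unfolding is_existential_def hom_def by blast

lemma le_exI:
  assumes \<alpha>: "\<alpha> \<in> car P (prd C X Y)" and s: "cdom C s = X" "ccod C s = Y"
  shows "leq P X (rx P (tup C (idt C X) s) \<alpha>) (ex P X Y \<alpha>)"
proof -
  have "leq P (prd C X Y) \<alpha> (rx P (pr1 C X Y) (ex P X Y \<alpha>))"
    using \<alpha> by (subst ex_le_iff [symmetric]) (auto intro: leq_refl)
  then have "leq P X (rx P (tup C (idt C X) s) \<alpha>)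
      (rx P (tup C (idt C X) s) (rx P (pr1 C X Y) (ex P X Y \<alpha>)))"
    using \<alpha> s by (intro rx_mono) auto
  then show ?thesis
    using \<alpha> s by simp
qed

lemma ex_leI: "\<alpha> \<in> car P (prd C X Y) \<Longrightarrow> \<beta> \<in> car P X \<Longrightarrow>
    leq P (prd C X Y) \<alpha> (rx P (pr1 C X Y) \<beta>) \<Longrightarrow> leq P X (ex P X Y \<alpha>) \<beta>"
  using ex_le_iff by blast

end

locale elem_exist_doctrine = elementary_doctrine + existential_doctrine
begin

lemma rcomp_unfolded: "rcomp C P X Y Z \<phi> \<psi> =
    ex P (prd C X Z) Y
      (mt P (prd C (prd C X Z) Y)
        (rx P (tup C (cmp C (pr1 C X Z) (pr1 C (prd C X Z) Y)) (pr2 C (prd C X Z) Y)) \<phi>)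
        (rx P (tup C (pr2 C (prd C X Z) Y) (cmp C (pr2 C X Z) (pr1 C (prd C X Z) Y))) \<psi>))"
  unfolding rcomp_def Let_def ..

lemma rcomp_car [simp]:
  "\<phi> \<in> car P (prd C X Y) \<Longrightarrow> \<psi> \<in> car P (prd C Y Z) \<Longrightarrow> rcomp C P X Y Z \<phi> \<psi> \<in> car P (prd C X Z)"
  unfolding rcomp_unfolded by simp

lemma le_rcompI:
  assumes "\<phi> \<in> car P (prd C X Y)" "\<psi> \<in> car P (prd C Y Z)" "\<gamma> \<in> car P (prd C X Z)"
    and "cdom C s = prd C X Z" "ccod C s = Y"
    and "leq P (prd C X Z) \<gamma> (rx P (tup C (idt C (prd C X Z)) s)
      (mt P (prd C (prd C X Z) Y)
        (rx P (tup C (cmp C (pr1 C X Z) (pr1 C (prd C X Z) Y)) (pr2 C (prd C X Z) Y)) \<phi>)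
        (rx P (tup C (pr2 C (prd C X Z) Y) (cmp C (pr2 C X Z) (pr1 C (prd C X Z) Y))) \<psi>)))"
  shows "leq P (prd C X Z) \<gamma> (rcomp C P X Y Z \<phi> \<psi>)"
  unfolding rcomp_unfolded
  by (rule leq_trans [OF _ _ _ assms(6) le_exI]) (use assms in simp_all)

lemma rcomp_leI:
  assumes "\<phi> \<in> car P (prd C X Y)" "\<psi> \<in> car P (prd C Y Z)" "\<beta> \<in> car P (prd C X Z)"
    and "leq P (prd C (prd C X Z) Y)
      (mt P (prd C (prd C X Z) Y)
        (rx P (tup C (cmp C (pr1 C X Z) (pr1 C (prd C X Z) Y)) (pr2 C (prd C X Z) Y)) \<phi>)
        (rx P (tup C (pr2 C (prd C X Z) Y) (cmp C (pr2 C X Z) (pr1 C (prd C X Z) Y))) \<psi>))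
      (rx P (pr1 C (prd C X Z) Y) \<beta>)"
  shows "leq P (prd C X Z) (rcomp C P X Y Z \<phi> \<psi>) \<beta>"
  unfolding rcomp_unfolded
  by (rule ex_leI) (use assms in simp_all)

lemma rtensor_unfolded: "rtensor C P X Y U V \<phi> \<psi> =
    mt P (prd C (prd C X U) (prd C Y V))
      (rx P (tup C (cmp C (pr1 C X U) (pr1 C (prd C X U) (prd C Y V)))
                   (cmp C (pr1 C Y V) (pr2 C (prd C X U) (prd C Y V)))) \<phi>)
      (rx P (tup C (cmp C (pr2 C X U) (pr1 C (prd C X U) (prd C Y V)))
                   (cmp C (pr2 C Y V) (pr2 C (prd C X U) (prd C Y V)))) \<psi>)"
  unfolding rtensor_def Let_def ..

lemma rtensor_car [simp]: "\<phi> \<in> car P (prd C X Y) \<Longrightarrow> \<psi> \<in> car P (prd C U V) \<Longrightarrow>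
    rtensor C P X Y U V \<phi> \<psi> \<in> car P (prd C (prd C X U) (prd C Y V))"
  unfolding rtensor_unfolded by simp

lemma rcopy_car [simp]: "rcopy C P X \<in> car P (prd C X (prd C X X))"
  unfolding rcopy_def graph_def product_arrow_defs by simp

lemma rcomp_rcopy_le_eqp:
  assumes \<phi>: "\<phi> \<in> car P (prd C X Y)"
  shows "leq P (prd C X (prd C Y Y)) (rcomp C P X Y (prd C Y Y) \<phi> (rcopy C P Y))
    (rx P (tpr23 X Y Y) (eqp P Y))"
proof -
  let ?W = "prd C X (prd C Y Y)"
  let ?V = "prd C ?W Y"
  let ?z = "pr2 C ?W Y"
  let ?yy' = "cmp C (pr2 C X (prd C Y Y)) (pr1 C ?W Y)"
  let ?pp' = "pr2 C ?V (prd C Y Y)"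
  \<comment> \<open>\<open>copy\<^sub>Y\<close> relates \<open>z\<close> to \<open>(z,z)\<close>; substitute \<open>(y,y')\<close> for \<open>(p,p') = (z,z)\<close> in \<open>\<delta>\<^sub>Y(p,p')\<close>.\<close>
  have "leq P ?V (mt P ?V (tp P ?V) (rx P (tup C (tup C ?z ?z) ?yy') (eqp P (prd C Y Y))))
      (rx P (tup C (cmp C (pr1 C Y Y) ?yy') (cmp C (pr2 C Y Y) ?yy')) (eqp P Y))"
    using eqp_subst [of "rx P (tup C (cmp C (pr1 C Y Y) ?pp') (cmp C (pr2 C Y Y) ?pp')) (eqp P Y)"
        ?V "prd C Y Y" "tup C ?z ?z" ?yy']
    by simp
  then show ?thesis
    unfolding rcomp_unfolded using \<phi>
    by (intro ex_leI) (simp_all add: product_arrow_defs rcopy_def graph_def mt_leI2)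
qed

lemma le_rcomp_rcopy:
  assumes \<phi>: "\<phi> \<in> car P (prd C X Y)"
  shows "leq P (prd C X (prd C Y Y))
    (mt P (prd C X (prd C Y Y)) (rx P (tpr12 X Y Y) \<phi>) (rx P (tpr23 X Y Y) (eqp P Y)))
    (rcomp C P X Y (prd C Y Y) \<phi> (rcopy C P Y))"
proof -
  let ?W = "prd C X (prd C Y Y)"
  let ?y = "cmp C (pr1 C Y Y) (pr2 C X (prd C Y Y))"
  let ?y' = "cmp C (pr2 C Y Y) (pr2 C X (prd C Y Y))"
  let ?y\<^sub>0 = "cmp C ?y (pr1 C ?W Y)"
  \<comment> \<open>Take \<open>y\<close> as the witness; \<open>copy\<^sub>Y(y,(y,y'))\<close> follows by substituting \<open>y'\<close> for \<open>p = y\<close> in \<open>(y,y) = (y,p)\<close>.\<close>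
  have "leq P ?W (mt P ?W (tp P ?W) (rx P (tup C ?y ?y') (eqp P Y)))
      (rx P (tup C (tup C ?y ?y) (tup C ?y ?y')) (eqp P (prd C Y Y)))"
    using eqp_subst [of "rx P (tup C (tup C ?y\<^sub>0 ?y\<^sub>0) (tup C ?y\<^sub>0 (pr2 C ?W Y))) (eqp P (prd C Y Y))"
        ?W Y ?y ?y']
    by simp
  then show ?thesis
    using \<phi> by (intro le_rcompI [where s = ?y])
      (simp_all add: product_arrow_defs rcopy_def graph_def mt_mono_right)
qed

lemma rcopy_rcomp_rtensor:
  assumes \<phi>: "\<phi> \<in> car P (prd C X Y)"
  shows "rcomp C P X (prd C X X) (prd C Y Y) (rcopy C P X) (rtensor C P X Y X Y \<phi> \<phi>) =
    mt P (prd C X (prd C Y Y)) (rx P (tpr12 X Y Y) \<phi>) (rx P (tpr13 X Y Y) \<phi>)"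
proof (rule leq_antisym [of _ "prd C X (prd C Y Y)"])
  let ?W = "prd C X (prd C Y Y)"
  let ?XX = "prd C X X"
  let ?V = "prd C ?W ?XX"
  let ?x = "cmp C (pr1 C X (prd C Y Y)) (pr1 C ?W ?XX)"
  let ?yy' = "cmp C (pr2 C X (prd C Y Y)) (pr1 C ?W ?XX)"
  let ?x\<^sub>1\<^sub>2 = "pr2 C ?W ?XX"
  let ?q = "pr1 C ?V ?XX"
  let ?r = "pr2 C ?V ?XX"
  let ?\<gamma> = "mt P (prd C ?V ?XX)
     (rx P (tup C (cmp C (pr1 C X X) ?r) (cmp C (pr1 C Y Y) (cmp C ?yy' ?q))) \<phi>)
     (rx P (tup C (cmp C (pr2 C X X) ?r) (cmp C (pr2 C Y Y) (cmp C ?yy' ?q))) \<phi>)"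
  \<comment> \<open>A witness \<open>(x\<^sub>1,x\<^sub>2)\<close> with \<open>copy\<^sub>X(x,(x\<^sub>1,x\<^sub>2))\<close> can be replaced by \<open>(x,x)\<close>.\<close>
  have "leq P ?V (mt P ?V (rx P (tup C (idt C ?V) ?x\<^sub>1\<^sub>2) ?\<gamma>)
        (rx P (tup C (tup C ?x ?x) ?x\<^sub>1\<^sub>2) (eqp P ?XX)))
      (rx P (tup C (idt C ?V) (tup C ?x ?x)) ?\<gamma>)"
    by (rule eqp_subst_sym) (use \<phi> in simp_all)
  then show "leq P ?W (rcomp C P X ?XX (prd C Y Y) (rcopy C P X) (rtensor C P X Y X Y \<phi> \<phi>))
      (mt P ?W (rx P (tpr12 X Y Y) \<phi>) (rx P (tpr13 X Y Y) \<phi>))"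
    using \<phi> by (intro rcomp_leI)
      (simp_all add: product_arrow_defs rcopy_def graph_def rtensor_unfolded mt_commute)
  show "leq P ?W (mt P ?W (rx P (tpr12 X Y Y) \<phi>) (rx P (tpr13 X Y Y) \<phi>))
      (rcomp C P X ?XX (prd C Y Y) (rcopy C P X) (rtensor C P X Y X Y \<phi> \<phi>))"
    using \<phi> by (intro le_rcompI [where s = "tup C (pr1 C X (prd C Y Y)) (pr1 C X (prd C Y Y))"])
      (simp_all add: product_arrow_defs rcopy_def graph_def rtensor_unfolded leq_refl)
qed (use \<phi> in \<open>simp_all add: product_arrow_defs\<close>)

lemma rdisc_eq_tp: "rdisc C P X = tp P (prd C X (one C))"
  unfolding rdisc_def graph_def cross_def by simp

lemma rcomp_rdisc: "\<phi> \<in> car P (prd C X Y) \<Longrightarrow>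
    rcomp C P X Y (one C) \<phi> (rdisc C P Y) = rx P (pr1 C X (one C)) (ex P X Y \<phi>)"
  unfolding rcomp_unfolded rdisc_eq_tp by (simp add: rx_ex cross_def)

lemma map_copy_iff_functional:
  assumes \<phi>: "\<phi> \<in> car P (prd C X Y)"
  shows "leq P (prd C X (prd C Y Y))
      (rcomp C P X (prd C X X) (prd C Y Y) (rcopy C P X) (rtensor C P X Y X Y \<phi> \<phi>))
      (rcomp C P X Y (prd C Y Y) \<phi> (rcopy C P Y))
    \<longleftrightarrow> functional C P X Y \<phi>"
proof -
  let ?W = "prd C X (prd C Y Y)"
  let ?\<phi>\<^sub>1\<^sub>2 = "rx P (tpr12 X Y Y) \<phi>"
  let ?\<phi>\<^sub>1\<^sub>3 = "rx P (tpr13 X Y Y) \<phi>"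
  let ?\<delta>\<^sub>2\<^sub>3 = "rx P (tpr23 X Y Y) (eqp P Y)"
  let ?R = "rcomp C P X Y (prd C Y Y) \<phi> (rcopy C P Y)"
  have car: "?\<phi>\<^sub>1\<^sub>2 \<in> car P ?W" "?\<phi>\<^sub>1\<^sub>3 \<in> car P ?W" "?\<delta>\<^sub>2\<^sub>3 \<in> car P ?W" "?R \<in> car P ?W"
    using \<phi> by (simp_all add: product_arrow_defs)
  have "leq P ?W (mt P ?W ?\<phi>\<^sub>1\<^sub>2 ?\<phi>\<^sub>1\<^sub>3) ?R \<longleftrightarrow> leq P ?W (mt P ?W ?\<phi>\<^sub>1\<^sub>2 ?\<phi>\<^sub>1\<^sub>3) ?\<delta>\<^sub>2\<^sub>3"
  proof
    assume "leq P ?W (mt P ?W ?\<phi>\<^sub>1\<^sub>2 ?\<phi>\<^sub>1\<^sub>3) ?R"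
    with rcomp_rcopy_le_eqp [OF \<phi>] car show "leq P ?W (mt P ?W ?\<phi>\<^sub>1\<^sub>2 ?\<phi>\<^sub>1\<^sub>3) ?\<delta>\<^sub>2\<^sub>3"
      by (meson leq_trans mt_car)
  next
    assume "leq P ?W (mt P ?W ?\<phi>\<^sub>1\<^sub>2 ?\<phi>\<^sub>1\<^sub>3) ?\<delta>\<^sub>2\<^sub>3"
    then have "leq P ?W (mt P ?W ?\<phi>\<^sub>1\<^sub>2 ?\<phi>\<^sub>1\<^sub>3) (mt P ?W ?\<phi>\<^sub>1\<^sub>2 ?\<delta>\<^sub>2\<^sub>3)"
      using car by (intro mt_greatest mt_le1) auto
    with le_rcomp_rcopy [OF \<phi>] car show "leq P ?W (mt P ?W ?\<phi>\<^sub>1\<^sub>2 ?\<phi>\<^sub>1\<^sub>3) ?R"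
      by (meson leq_trans mt_car)
  qed
  then show ?thesis
    unfolding rcopy_rcomp_rtensor [OF \<phi>] functional_def .
qed

lemma map_disc_iff_entire:
  assumes \<phi>: "\<phi> \<in> car P (prd C X Y)"
  shows "leq P (prd C X (one C)) (rdisc C P X) (rcomp C P X Y (one C) \<phi> (rdisc C P Y))
    \<longleftrightarrow> entire C P X Y \<phi>"
  unfolding rcomp_rdisc [OF \<phi>] unfolding rdisc_eq_tp entire_def
proof
  assume "leq P (prd C X (one C)) (tp P (prd C X (one C))) (rx P (pr1 C X (one C)) (ex P X Y \<phi>))"
  then have "leq P X (rx P (tup C (idt C X) (bang C X)) (tp P (prd C X (one C))))
      (rx P (tup C (idt C X) (bang C X)) (rx P (pr1 C X (one C)) (ex P X Y \<phi>)))"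
    using \<phi> by (intro rx_mono) auto
  then show "leq P X (tp P X) (ex P X Y \<phi>)"
    using \<phi> by simp
next
  assume "leq P X (tp P X) (ex P X Y \<phi>)"
  then have "leq P (prd C X (one C)) (rx P (pr1 C X (one C)) (tp P X))
      (rx P (pr1 C X (one C)) (ex P X Y \<phi>))"
    using \<phi> by (intro rx_mono) auto
  then show "leq P (prd C X (one C)) (tp P (prd C X (one C))) (rx P (pr1 C X (one C)) (ex P X Y \<phi>))"
    by simp
qed

end

theorem proposition29:
  fixes C :: "('o,'a) fpcat" and P :: "('o,'a,'p) doctrine"
    and X Y :: 'o and \<phi> :: 'p
  assumes "is_elem_exist_doctrine C P"
    and "\<phi> \<in> car P (prd C X Y)"
  shows "is_map C P X Y \<phi> \<longleftrightarrow> functional C P X Y \<phi> \<and> entire C P X Y \<phi>"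
proof -
  interpret elem_exist_doctrine C P
    using assms(1) unfolding is_elem_exist_doctrine_def by unfold_locales auto
  show ?thesis
    unfolding is_map_def
    using map_copy_iff_functional [OF assms(2)] map_disc_iff_entire [OF assms(2)] by blast
qed

end
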